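(* Let $T$ be a compact metric space, let $\eta$ be a sample-continuous max-infinitely divisible process on $T$ with vertex function identically $0$ and exponent measure $\mu$, and let $\Phi=\sum_{i=1}^N\delta_{\phi_i}$ be a Poisson random measure on $\mathbb{C}_0$ with intensity $\mu$ with $\eta=\max(\Phi)$. Let $K\subset T$ be closed and $\Phi_K^+=\sum_{i=1}^N1_{\{\exists t\in K:\ \phi_i(t)\ge\eta(t)\}}\delta_{\phi_i}$ the $K$-extremal point measure. Then $\Phi_K^+$ is almost surely finite if and only if one of the following holds: (i) $\mu(\mathbb{C}_0)<+\infty$; (ii) $\mu(\mathbb{C}_0)=+\infty$ and $\inf_{t\in K}\eta(t)>0$ almost surely.
   Context: $\mathbb{C}_0$ is the set of continuous $f:T\to[0,\infty)$ not identically zero with the sup norm. The vertex function is $h(t)=\sup\{x:\mathbb P(\eta(t)\ge x)=1\}$; the exponent measure $\mu$ is a Borel measure on $\mathbb{C}_0$ with $\mu(\{f:\|f\|>\varepsilon\})<\infty$ for all $\varepsilon>0$, such that $\mathbb P[\eta(K_i)<x_i,1\le i\le n]=\exp[-\mu(\cup_i\{f: f(K_i)\ge x_i\})]$ ($f(A)=\sup_Af$). $\max(\Phi)(t)=\max\{\phi(t):\phi\text{ atom of }\Phi\}$, and $0$ if $\Phi=0$. *)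

theory Defs
  imports "HOL-Probability.Probability"
begin

text \<open>The space C_0 of continuous nonnegative functions on T (here the type 'a, a compact
  metric space) that are not identically zero, as a subset of the Banach space of
  bounded continuous functions with the sup norm.\<close>
definition C0 :: "('a::metric_space \<Rightarrow>\<^sub>C real) set" where
  "C0 = {f. (\<forall>t. 0 \<le> apply_bcontfun f t) \<and> f \<noteq> 0}"

text \<open>A point measure Phi = sum_{i < N} delta_{phi i} is represented by its number of atoms
  N (possibly infinite) and an enumeration phi of its atoms (with multiplicity).
  pm_count N phi A is Phi(A).\<close>
definition pm_count :: "enat \<Rightarrow> (nat \<Rightarrow> 'c) \<Rightarrow> 'c set \<Rightarrow> enat" where
  "pm_count N phi A =
     (if finite {i. enat i < N \<and> phi i \<in> A} then enat (card {i. enat i < N \<and> phi i \<in> A})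
      else \<infinity>)"

definition pm_max :: "enat \<Rightarrow> (nat \<Rightarrow> ('a::metric_space \<Rightarrow>\<^sub>C real)) \<Rightarrow> 'a \<Rightarrow> real" where
  "pm_max N phi t = (if N = 0 then 0 else Sup {apply_bcontfun (phi i) t | i. enat i < N})"

definition poisson_random_measure ::
  "'w measure \<Rightarrow> 'c measure \<Rightarrow> ('w \<Rightarrow> enat) \<Rightarrow> ('w \<Rightarrow> nat \<Rightarrow> 'c) \<Rightarrow> bool" where
  "poisson_random_measure M mu N phi \<longleftrightarrow>
     (\<forall>\<omega>\<in>space M. \<forall>i. enat i < N \<omega> \<longrightarrow> phi \<omega> i \<in> space mu) \<and>
     (\<forall>A\<in>sets mu. (\<lambda>\<omega>. pm_count (N \<omega>) (phi \<omega>) A) \<in> measurable M (count_space UNIV)) \<and>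
     (\<forall>A\<in>sets mu. emeasure mu A < \<infinity> \<longrightarrow>
        (\<forall>k::nat. measure M {\<omega>\<in>space M. pm_count (N \<omega>) (phi \<omega>) A = enat k}
            = enn2real (emeasure mu A) ^ k / fact k * exp (- enn2real (emeasure mu A)))) \<and>
     (\<forall>A\<in>sets mu. emeasure mu A = \<infinity> \<longrightarrow>
        (AE \<omega> in M. pm_count (N \<omega>) (phi \<omega>) A = \<infinity>)) \<and>
     (\<forall>(n::nat) A. (\<forall>i<n. A i \<in> sets mu) \<and> disjoint_family_on A {..<n} \<longrightarrow>
        prob_space.indep_vars M (\<lambda>_. count_space UNIV)
          (\<lambda>i \<omega>. pm_count (N \<omega>) (phi \<omega>) (A i)) {..<n})"

text \<open>mu is an exponent measure of the process eta: a Borel measure on C_0 with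
  mu({||f|| > eps}) finite for every eps > 0 and
  P[eta(K_i) < x_i, i < n] = exp(-mu(U_i {f. f(K_i) >= x_i})), f(A) = sup_A f.
  (Vertex function is 0, so the relation is required for x_i > 0 and nonempty closed,
  hence compact, K_i.)\<close>
definition exponent_measure ::
  "'w measure \<Rightarrow> ('w \<Rightarrow> 'a::metric_space \<Rightarrow> real) \<Rightarrow> ('a \<Rightarrow>\<^sub>C real) measure \<Rightarrow> bool" where
  "exponent_measure M \<eta> mu \<longleftrightarrow>
     space mu = C0 \<and> sets mu = sets (restrict_space borel C0) \<and>
     (\<forall>\<epsilon>>0. emeasure mu {f\<in>C0. norm f > \<epsilon>} < \<infinity>) \<and>
     (\<forall>(n::nat) (K::nat \<Rightarrow> 'a set) (x::nat \<Rightarrow> real).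
        (\<forall>i<n. closed (K i) \<and> K i \<noteq> {} \<and> 0 < x i) \<longrightarrow>
        measure M {\<omega>\<in>space M. \<forall>i<n. Sup (\<eta> \<omega> ` K i) < x i}
          = exp (- enn2real (emeasure mu (\<Union>i<n. {f\<in>C0. Sup (apply_bcontfun f ` K i) \<ge> x i}))))"

definition vertex :: "'w measure \<Rightarrow> ('w \<Rightarrow> 'a \<Rightarrow> real) \<Rightarrow> 'a \<Rightarrow> real" where
  "vertex M \<eta> t = Sup {x. measure M {\<omega>\<in>space M. \<eta> \<omega> t \<ge> x} = 1}"

end

theory Submission
  imports Defs
begin

text \<open>If \<open>\<mu>\<close> is finite, \<open>\<Phi>\<close> has finitely many atoms and so does \<open>\<Phi>\<^sup>+\<^sub>K\<close>. If \<open>\<mu>\<close> is infinite,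
  \<open>\<Phi>\<close> has infinitely many atoms. When \<open>\<eta>\<close> attains a value \<open>\<le> 0\<close> on the compact set \<open>K\<close>, every
  (nonnegative) atom is \<open>K\<close>-extremal at that point, so \<open>\<Phi>\<^sup>+\<^sub>K\<close> is infinite. When
  \<open>inf\<^sub>K \<eta> > \<epsilon> > 0\<close>, every \<open>K\<close>-extremal atom has sup norm \<open>> \<epsilon>\<close>, and \<open>\<mu>{\<parallel>f\<parallel> > \<epsilon>} < \<infinity>\<close>
  leaves only finitely many of those.\<close>

definition extremal_atoms ::
    "'a set \<Rightarrow> ('a \<Rightarrow> real) \<Rightarrow> enat \<Rightarrow> (nat \<Rightarrow> ('a::metric_space \<Rightarrow>\<^sub>C real)) \<Rightarrow> nat set"
  where "extremal_atoms K \<eta> n \<phi> = {i. enat i < n \<and> (\<exists>t\<in>K. apply_bcontfun (\<phi> i) t \<ge> \<eta> t)}"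

lemma poisson_probabilities_sums: "(\<lambda>k. l ^ k / fact k * exp (- l)) sums (1::real)"
  using sums_mult2[OF exp_converges[of l], of "exp (- l)"]
  by (simp add: divide_inverse mult.commute exp_minus)

lemma pm_count_eq_infinity_iff:
  "pm_count n \<phi> A = \<infinity> \<longleftrightarrow> infinite {i. enat i < n \<and> \<phi> i \<in> A}"
  by (simp add: pm_count_def)

lemma poisson_random_measure_AE_finite:
  assumes "prob_space M" "poisson_random_measure M \<mu> N \<phi>"
    and "A \<in> sets \<mu>" "emeasure \<mu> A < \<infinity>"
  shows "AE \<omega> in M. finite {i. enat i < N \<omega> \<and> \<phi> \<omega> i \<in> A}"
proof -
  interpret prob_space M by fact
  define B where "B k = {\<omega>\<in>space M. pm_count (N \<omega>) (\<phi> \<omega>) A = enat k}" for k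
  have "(\<lambda>\<omega>. pm_count (N \<omega>) (\<phi> \<omega>) A) \<in> measurable M (count_space UNIV)"
    using assms(2,3) unfolding poisson_random_measure_def by blast
  then have B_sets: "range B \<subseteq> sets M"
    unfolding B_def by (auto intro: measurable_sets_Collect)
  have "(\<lambda>k. measure M (B k)) sums measure M (\<Union>k. B k)"
    by (rule measure_UNION[OF B_sets]) (auto simp: disjoint_family_on_def B_def emeasure_eq_measure)
  moreover have "(\<lambda>k. measure M (B k)) sums 1"
    using assms(2-4) poisson_probabilities_sums
    unfolding B_def poisson_random_measure_def by auto
  ultimately have "measure M (\<Union>k. B k) = 1"
    using sums_unique2 by blast
  then have "AE \<omega> in M. \<omega> \<in> (\<Union>k. B k)"
    by (rule AE_prob_1)
  then show ?thesis
    by eventually_elim (auto simp: B_def pm_count_def split: if_splits)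
qed

lemma poisson_random_measure_AE_infinite:
  assumes "poisson_random_measure M \<mu> N \<phi>" "A \<in> sets \<mu>" "emeasure \<mu> A = \<infinity>"
  shows "AE \<omega> in M. infinite {i. enat i < N \<omega> \<and> \<phi> \<omega> i \<in> A}"
  using assms unfolding poisson_random_measure_def pm_count_eq_infinity_iff by blast

lemma poisson_random_measure_atoms_in_space:
  assumes "poisson_random_measure M \<mu> N \<phi>" "\<omega> \<in> space M"
  shows "{i. enat i < N \<omega> \<and> \<phi> \<omega> i \<in> space \<mu>} = {i. enat i < N \<omega>}"
  using assms unfolding poisson_random_measure_def by auto

lemma poisson_random_measure_atoms_in_C0:
  assumes "exponent_measure M \<eta> \<mu>" "poisson_random_measure M \<mu> N \<phi>"
    and "\<omega> \<in> space M" "enat i < N \<omega>"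
  shows "\<phi> \<omega> i \<in> C0"
  using assms unfolding exponent_measure_def poisson_random_measure_def by auto

lemma norm_gt_in_sets_exponent_measure:
  fixes \<mu> :: "('a::metric_space \<Rightarrow>\<^sub>C real) measure"
  assumes "exponent_measure M \<eta> \<mu>"
  shows "{f\<in>C0. e < norm f} \<in> sets \<mu>"
proof -
  have "{f::'a \<Rightarrow>\<^sub>C real. e < norm f} \<in> sets borel"
    by (rule borel_open) (intro open_Collect_less continuous_on_const continuous_on_norm_id)
  moreover have "{f\<in>C0. e < norm f} = C0 \<inter> {f. e < norm f}"
    by blast
  ultimately show ?thesis
    using assms unfolding exponent_measure_def sets_restrict_space by auto
qed

text \<open>Monotonicity in \<open>\<epsilon>\<close> reduces the uncountably many thresholds to \<open>\<epsilon> = 1/(m+1)\<close>.\<close>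

lemma poisson_random_measure_AE_finite_norm_gt:
  assumes "prob_space M" "exponent_measure M \<eta> \<mu>" "poisson_random_measure M \<mu> N \<phi>"
  shows "AE \<omega> in M. \<forall>e>0. finite {i. enat i < N \<omega> \<and> e < norm (\<phi> \<omega> i)}"
proof -
  have "emeasure \<mu> {f\<in>C0. 1 / real (Suc m) < norm f} < \<infinity>" for m
    using assms(2) unfolding exponent_measure_def by simp
  then have "AE \<omega> in M. \<forall>m. finite {i. enat i < N \<omega> \<and> \<phi> \<omega> i \<in> {f\<in>C0. 1 / real (Suc m) < norm f}}"
    using poisson_random_measure_AE_finite[OF assms(1,3) norm_gt_in_sets_exponent_measure[OF assms(2)]]
    by (simp add: AE_all_countable)
  then show ?thesis
    using AE_space
  proof eventually_elim
    case (elim \<omega>)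
    note atoms_C0 = poisson_random_measure_atoms_in_C0[OF assms(2,3) elim(2)]
    show ?case
    proof safe
      fix e :: real assume "0 < e"
      then obtain m where "1 / real (Suc m) < e"
        using reals_Archimedean by (auto simp: inverse_eq_divide)
      with atoms_C0 show "finite {i. enat i < N \<omega> \<and> e < norm (\<phi> \<omega> i)}"
        using elim(1)[rule_format, of m] by (rule_tac rev_finite_subset) auto
    qed
  qed
qed

lemma extremal_atoms_eq_all:
  assumes "compact K" "continuous_on K \<eta>" "\<not> 0 < (INF t\<in>K. ereal (\<eta> t))"
    and "\<And>i t. enat i < n \<Longrightarrow> 0 \<le> apply_bcontfun (\<phi> i) t"
  shows "extremal_atoms K \<eta> n \<phi> = {i. enat i < n}"
proof -
  have "K \<noteq> {}"
    using assms(3) by (auto simp: top_ereal_def)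
  then obtain t0 where t0: "t0 \<in> K" "\<And>t. t \<in> K \<Longrightarrow> \<eta> t0 \<le> \<eta> t"
    using continuous_attains_inf[OF assms(1) _ assms(2)] by blast
  then have "ereal (\<eta> t0) \<le> (INF t\<in>K. ereal (\<eta> t))"
    by (auto intro: INF_greatest)
  with assms(3) have "ereal (\<eta> t0) \<le> 0"
    by (meson not_less order.trans)
  then have "\<eta> t0 \<le> apply_bcontfun (\<phi> i) t0" if "enat i < n" for i
    using assms(4)[OF that, of t0] by simp
  with t0(1) show ?thesis
    unfolding extremal_atoms_def by blast
qed

lemma extremal_atoms_subset_norm_gt:
  assumes "ereal e < (INF t\<in>K. ereal (\<eta> t))"
  shows "extremal_atoms K \<eta> n \<phi> \<subseteq> {i. enat i < n \<and> e < norm (\<phi> i)}"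
  unfolding extremal_atoms_def
proof safe
  fix i t assume "t \<in> K" and extremal: "\<eta> t \<le> apply_bcontfun (\<phi> i) t"
  then have "ereal e < ereal (\<eta> t)"
    using assms INF_lower[of t K "\<lambda>t. ereal (\<eta> t)"] by (meson order.strict_trans2)
  with extremal norm_bounded[of "\<phi> i" t] show "e < norm (\<phi> i)"
    by simp
qed

lemma finite_extremal_atoms_iff:
  assumes "compact K" "continuous_on K \<eta>" "infinite {i. enat i < n}"
    and "\<And>i t. enat i < n \<Longrightarrow> 0 \<le> apply_bcontfun (\<phi> i) t"
    and "\<forall>e>0. finite {i. enat i < n \<and> e < norm (\<phi> i)}"
  shows "finite (extremal_atoms K \<eta> n \<phi>) \<longleftrightarrow> 0 < (INF t\<in>K. ereal (\<eta> t))"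
proof
  assume "0 < (INF t\<in>K. ereal (\<eta> t))"
  then obtain e where "0 < e" "ereal e < (INF t\<in>K. ereal (\<eta> t))"
    by (metis ereal_dense2 ereal_less(2) less_ereal.simps(1) order.strict_trans)
  with assms(5) show "finite (extremal_atoms K \<eta> n \<phi>)"
    by (blast intro: rev_finite_subset dest: extremal_atoms_subset_norm_gt)
next
  assume "finite (extremal_atoms K \<eta> n \<phi>)"
  with assms(3) have "extremal_atoms K \<eta> n \<phi> \<noteq> {i. enat i < n}"
    by auto
  with extremal_atoms_eq_all[OF assms(1,2), of n \<phi>] assms(4) show "0 < (INF t\<in>K. ereal (\<eta> t))"
    by blast
qed

lemma AE_finite_extremal_atoms:
  assumes "prob_space M" "poisson_random_measure M \<mu> N \<phi>" "emeasure \<mu> (space \<mu>) < \<infinity>"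
  shows "AE \<omega> in M. finite (extremal_atoms K (\<eta> \<omega>) (N \<omega>) (\<phi> \<omega>))"
  using poisson_random_measure_AE_finite[OF assms(1,2) sets.top assms(3)] AE_space
  by eventually_elim
    (auto simp: poisson_random_measure_atoms_in_space[OF assms(2)] extremal_atoms_def
          elim: rev_finite_subset)

lemma AE_finite_extremal_atoms_iff:
  assumes "prob_space M" "exponent_measure M \<eta> \<mu>" "poisson_random_measure M \<mu> N \<phi>"
    and "emeasure \<mu> (space \<mu>) = \<infinity>" "compact K" "\<forall>\<omega>\<in>space M. continuous_on K (\<eta> \<omega>)"
  shows "AE \<omega> in M. finite (extremal_atoms K (\<eta> \<omega>) (N \<omega>) (\<phi> \<omega>))
                       \<longleftrightarrow> 0 < (INF t\<in>K. ereal (\<eta> \<omega> t))"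
  using poisson_random_measure_AE_infinite[OF assms(3) sets.top assms(4)]
    poisson_random_measure_AE_finite_norm_gt[OF assms(1-3)] AE_space
proof eventually_elim
  case (elim \<omega>)
  show ?case
  proof (rule finite_extremal_atoms_iff[OF assms(5)])
    show "continuous_on K (\<eta> \<omega>)"
      using assms(6) elim(3) by blast
    show "infinite {i. enat i < N \<omega>}"
      using elim(1) by (simp add: poisson_random_measure_atoms_in_space[OF assms(3) elim(3)])
    show "0 \<le> apply_bcontfun (\<phi> \<omega> i) t" if "enat i < N \<omega>" for i t
      using poisson_random_measure_atoms_in_C0[OF assms(2,3) elim(3) that] by (simp add: C0_def)
    show "\<forall>e>0. finite {i. enat i < N \<omega> \<and> e < norm (\<phi> \<omega> i)}"
      by (fact elim(2))
  qed
qed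

theorem proposition1:
  fixes M :: "'w measure"
    and \<eta> :: "'w \<Rightarrow> 'a::metric_space \<Rightarrow> real"
    and \<mu> :: "('a \<Rightarrow>\<^sub>C real) measure"
    and N :: "'w \<Rightarrow> enat"
    and \<phi> :: "'w \<Rightarrow> nat \<Rightarrow> ('a \<Rightarrow>\<^sub>C real)"
    and K :: "'a set"
  assumes "prob_space M"
    and "compact (UNIV :: 'a set)"
    and "\<And>t. (\<lambda>\<omega>. \<eta> \<omega> t) \<in> borel_measurable M"
    and "\<forall>\<omega>\<in>space M. continuous_on UNIV (\<eta> \<omega>)"
    and "\<forall>t. vertex M \<eta> t = 0"
    and "exponent_measure M \<eta> \<mu>"
    and "poisson_random_measure M \<mu> N \<phi>"
    and "AE \<omega> in M. \<eta> \<omega> = pm_max (N \<omega>) (\<phi> \<omega>)"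
    and "closed K"
  shows "(AE \<omega> in M. finite {i. enat i < N \<omega> \<and>
                        (\<exists>t\<in>K. apply_bcontfun (\<phi> \<omega> i) t \<ge> \<eta> \<omega> t)})
         \<longleftrightarrow> (emeasure \<mu> (space \<mu>) < \<infinity> \<or>
              (emeasure \<mu> (space \<mu>) = \<infinity> \<and>
               (AE \<omega> in M. Inf ((\<lambda>t. ereal (\<eta> \<omega> t)) ` K) > 0)))"
proof -
  have "compact K"
    using assms(2,9) compact_Int_closed by fastforce
  have continuous: "\<forall>\<omega>\<in>space M. continuous_on K (\<eta> \<omega>)"
    using assms(4) continuous_on_subset by blast
  show ?thesis
  proof (cases "emeasure \<mu> (space \<mu>) < \<infinity>")
    case True
    with AE_finite_extremal_atoms[OF assms(1,7) True] show ?thesis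
      by (simp add: extremal_atoms_def)
  next
    case False
    then have infinite_mu: "emeasure \<mu> (space \<mu>) = \<infinity>"
      by (simp add: less_top[symmetric])
    have "(AE \<omega> in M. finite (extremal_atoms K (\<eta> \<omega>) (N \<omega>) (\<phi> \<omega>)))
          \<longleftrightarrow> (AE \<omega> in M. 0 < (INF t\<in>K. ereal (\<eta> \<omega> t)))"
      using AE_finite_extremal_atoms_iff[OF assms(1,6,7) infinite_mu \<open>compact K\<close> continuous]
      by (rule eventually_subst)
    then show ?thesis
      unfolding extremal_atoms_def[symmetric] infinite_mu by blast
  qed
qed

end
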